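(* Let $t$ be a positive integer and let $G=K(n_1,\dots,n_s)$ be a complete $s$-partite graph. If $n_j\ge 2t$ for each $j=1,\dots,s$, then $\chi_t(G)=s$.
   Context: $K(n_1,\dots,n_s)$ denotes the complete $s$-partite graph whose parts have $n_1,\dots,n_s$ vertices. A map $f:V(G)\to\{1,\dots,k\}$ is a $t$-relaxed $k$-coloring if every vertex $u$ has at most $t$ neighbors $v$ with $f(v)=f(u)$; $\chi_t(G)$ is the minimum $k$ for which such a coloring exists. *)

theory Defs
  imports Main
begin

text \<open>A simple graph is given by a vertex set V and a symmetric irreflexive
adjacency relation E (only its restriction to V matters).\<close>

definition relaxed_coloring ::
  "'a set \<Rightarrow> ('a \<Rightarrow> 'a \<Rightarrow> bool) \<Rightarrow> nat \<Rightarrow> nat \<Rightarrow> ('a \<Rightarrow> nat) \<Rightarrow> bool" where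
  "relaxed_coloring V E t k f \<longleftrightarrow>
     (\<forall>u\<in>V. f u \<in> {1..k}) \<and>
     (\<forall>u\<in>V. card {v\<in>V. E u v \<and> f v = f u} \<le> t)"

definition relaxed_chromatic_number ::
  "'a set \<Rightarrow> ('a \<Rightarrow> 'a \<Rightarrow> bool) \<Rightarrow> nat \<Rightarrow> nat" where
  "relaxed_chromatic_number V E t = (LEAST k. \<exists>f. relaxed_coloring V E t k f)"

text \<open>Complete s-partite graph K(n_0,...,n_{s-1}): vertex (j,i) is the i-th
vertex of part j; two vertices are adjacent iff they lie in different parts.\<close>

definition cmp_vertices :: "nat \<Rightarrow> (nat \<Rightarrow> nat) \<Rightarrow> (nat \<times> nat) set" where
  "cmp_vertices s n = {(j, i). j < s \<and> i < n j}"

definition cmp_adj :: "nat \<times> nat \<Rightarrow> nat \<times> nat \<Rightarrow> bool" where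
  "cmp_adj u v \<longleftrightarrow> fst u \<noteq> fst v"

end

theory Submission
  imports Defs Complex_Main
begin

text \<open>Give every vertex of part \<open>j\<close> the weight \<open>1 / n\<^sub>j\<close>, so that the whole graph
weighs \<open>s\<close>. A colour class lying inside one part \<open>j\<close> has at most \<open>n\<^sub>j\<close> vertices.
A colour class meeting two parts, at \<open>u\<^sub>1\<close> and \<open>u\<^sub>2\<close>, is covered by the same-coloured
neighbourhoods of \<open>u\<^sub>1\<close> and \<open>u\<^sub>2\<close>, so it has at most \<open>2t\<close> vertices, each of weight at
most \<open>1 / (2t)\<close>. Either way a colour class weighs at most 1, so at least \<open>s\<close> colours
are needed; colouring each part with its own colour shows that \<open>s\<close> suffice.\<close>

lemma relaxed_chromatic_number_eqI:
  assumes "relaxed_coloring V E t k f"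
    and "\<And>k' f'. relaxed_coloring V E t k' f' \<Longrightarrow> k \<le> k'"
  shows "relaxed_chromatic_number V E t = k"
  unfolding relaxed_chromatic_number_def
  using assms by (intro Least_equality) blast+

lemma card_colour_class_le_double:
  assumes "finite V" and "relaxed_coloring V E t k f"
    and "u\<^sub>1 \<in> V" "u\<^sub>2 \<in> V" "f u\<^sub>1 = c" "f u\<^sub>2 = c"
    and "\<And>v. v \<in> V \<Longrightarrow> f v = c \<Longrightarrow> E u\<^sub>1 v \<or> E u\<^sub>2 v"
  shows "card {v\<in>V. f v = c} \<le> 2 * t"
proof -
  let ?N = "\<lambda>u. {v\<in>V. E u v \<and> f v = f u}"
  have "card {v\<in>V. f v = c} \<le> card (?N u\<^sub>1 \<union> ?N u\<^sub>2)"
    using assms by (intro card_mono) auto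
  also have "\<dots> \<le> card (?N u\<^sub>1) + card (?N u\<^sub>2)"
    by (rule card_Un_le)
  also have "\<dots> \<le> t + t"
    using assms(2-4) unfolding relaxed_coloring_def by (intro add_mono) auto
  finally show ?thesis
    by simp
qed

lemma cmp_vertices_Sigma: "cmp_vertices s n = Sigma {..<s} (\<lambda>j. {..<n j})"
  unfolding cmp_vertices_def by auto

lemma finite_cmp_vertices: "finite (cmp_vertices s n)"
  unfolding cmp_vertices_Sigma by auto

definition cmp_weight :: "(nat \<Rightarrow> nat) \<Rightarrow> nat \<times> nat \<Rightarrow> real" where
  "cmp_weight n v = 1 / real (n (fst v))"

lemma sum_cmp_weight_cmp_vertices:
  assumes "\<forall>j<s. n j > 0"
  shows "(\<Sum>v\<in>cmp_vertices s n. cmp_weight n v) = real s"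
proof -
  have "(\<Sum>v\<in>cmp_vertices s n. cmp_weight n v) = (\<Sum>j<s. \<Sum>i<n j. 1 / real (n j))"
    unfolding cmp_vertices_Sigma cmp_weight_def
    by (subst sum.Sigma) (auto simp: case_prod_beta)
  also have "\<dots> = (\<Sum>j<s. 1)"
    using assms by (intro sum.cong) auto
  finally show ?thesis
    by simp
qed

lemma sum_cmp_weight_within_part_le_1:
  assumes "C \<subseteq> cmp_vertices s n" and "\<And>v. v \<in> C \<Longrightarrow> fst v = j" and "n j > 0"
  shows "(\<Sum>v\<in>C. cmp_weight n v) \<le> 1"
proof -
  have "C \<subseteq> {j} \<times> {..<n j}"
    using assms(1,2) unfolding cmp_vertices_def by auto
  then have "card C \<le> n j"
    using card_mono[of "{j} \<times> {..<n j}" C] by simp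
  moreover have "(\<Sum>v\<in>C. cmp_weight n v) = real (card C) / real (n j)"
    using assms(2) by (simp add: cmp_weight_def)
  ultimately show ?thesis
    using assms(3) by simp
qed

lemma sum_cmp_weight_card_le_1:
  assumes "t \<ge> 1" and "\<forall>j<s. n j \<ge> 2 * t"
    and "C \<subseteq> cmp_vertices s n" and "card C \<le> 2 * t"
  shows "(\<Sum>v\<in>C. cmp_weight n v) \<le> 1"
proof -
  have "(\<Sum>v\<in>C. cmp_weight n v) \<le> (\<Sum>v\<in>C. 1 / real (2 * t))"
  proof (rule sum_mono)
    fix v assume "v \<in> C"
    then have "n (fst v) \<ge> 2 * t"
      using assms(2,3) unfolding cmp_vertices_def by auto
    then show "cmp_weight n v \<le> 1 / real (2 * t)"
      using assms(1) unfolding cmp_weight_def by (intro divide_left_mono) auto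
  qed
  also have "\<dots> = real (card C) / real (2 * t)"
    by simp
  also have "\<dots> \<le> 1"
    using assms(1,4) by simp
  finally show ?thesis .
qed

lemma sum_cmp_weight_colour_class_le_1:
  assumes "t \<ge> 1" and "\<forall>j<s. n j \<ge> 2 * t"
    and col: "relaxed_coloring (cmp_vertices s n) cmp_adj t k f"
  shows "(\<Sum>v\<in>{v\<in>cmp_vertices s n. f v = c}. cmp_weight n v) \<le> 1"
proof -
  let ?V = "cmp_vertices s n"
  let ?C = "{v\<in>?V. f v = c}"
  consider (empty) "?C = {}"
    | (one_part) u where "u \<in> ?C" "\<And>v. v \<in> ?C \<Longrightarrow> fst v = fst u"
    | (two_parts) u\<^sub>1 u\<^sub>2 where "u\<^sub>1 \<in> ?C" "u\<^sub>2 \<in> ?C" "fst u\<^sub>1 \<noteq> fst u\<^sub>2"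
  proof (cases "?C = {}")
    case False
    then obtain u where u: "u \<in> ?C"
      by blast
    show ?thesis
    proof (cases "\<exists>v\<in>?C. fst v \<noteq> fst u")
      case True
      then obtain v where "v \<in> ?C" "fst v \<noteq> fst u"
        by blast
      with u show ?thesis
        by (intro that(3)[of v u])
    next
      case False
      with u show ?thesis
        by (intro that(2)[of u]) auto
    qed
  qed (rule that(1))
  then show ?thesis
  proof cases
    case empty
    show ?thesis
      by (subst empty) simp
  next
    case one_part
    have "fst u < s"
      using one_part(1) by (auto simp: cmp_vertices_def)
    then have "n (fst u) > 0"
      using assms(1,2) by (auto intro: less_le_trans)
    with one_part(2) show ?thesis
      by (intro sum_cmp_weight_within_part_le_1[of _ s]) auto
  next
    case two_parts
    have "fst u\<^sub>1 \<noteq> fst v \<or> fst u\<^sub>2 \<noteq> fst v" for v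
      using two_parts(3) by auto
    then have "card ?C \<le> 2 * t"
      using two_parts(1,2) finite_cmp_vertices col
      by (intro card_colour_class_le_double[of ?V cmp_adj t k f u\<^sub>1 u\<^sub>2])
        (simp_all add: cmp_adj_def)
    with assms(1,2) show ?thesis
      by (intro sum_cmp_weight_card_le_1) auto
  qed
qed

lemma relaxed_coloring_cmp_colours_ge:
  assumes "t \<ge> 1" and "\<forall>j<s. n j \<ge> 2 * t"
    and col: "relaxed_coloring (cmp_vertices s n) cmp_adj t k f"
  shows "s \<le> k"
proof -
  let ?V = "cmp_vertices s n"
  have "f ` ?V \<subseteq> {1..k}"
    using col unfolding relaxed_coloring_def by auto
  have "real s = (\<Sum>v\<in>?V. cmp_weight n v)"
    using assms(1,2) by (intro sum_cmp_weight_cmp_vertices[symmetric]) (auto intro: less_le_trans)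
  also have "\<dots> = (\<Sum>c\<in>{1..k}. \<Sum>v\<in>{v\<in>?V. f v = c}. cmp_weight n v)"
    using \<open>f ` ?V \<subseteq> {1..k}\<close> by (intro sum.group[symmetric] finite_cmp_vertices) auto
  also have "\<dots> \<le> (\<Sum>c\<in>{1..k}. 1)"
    using assms by (intro sum_mono sum_cmp_weight_colour_class_le_1)
  finally show ?thesis
    by simp
qed

lemma relaxed_coloring_cmp_by_part:
  "relaxed_coloring (cmp_vertices s n) cmp_adj t s (\<lambda>v. fst v + 1)"
  unfolding relaxed_coloring_def
proof (intro conjI ballI)
  fix u
  assume "u \<in> cmp_vertices s n"
  then show "fst u + 1 \<in> {1..s}"
    by (auto simp: cmp_vertices_def)
  have "{v\<in>cmp_vertices s n. cmp_adj u v \<and> fst v + 1 = fst u + 1} = {}"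
    by (auto simp: cmp_adj_def)
  then show "card {v\<in>cmp_vertices s n. cmp_adj u v \<and> fst v + 1 = fst u + 1} \<le> t"
    by (simp only: card.empty)
qed

theorem corollary2p3:
  fixes t s :: nat and n :: "nat \<Rightarrow> nat"
  assumes "t \<ge> 1"
    and "\<forall>j<s. n j \<ge> 2 * t"
  shows "relaxed_chromatic_number (cmp_vertices s n) cmp_adj t = s"
  using relaxed_coloring_cmp_by_part relaxed_coloring_cmp_colours_ge[OF assms]
  by (rule relaxed_chromatic_number_eqI)

end
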